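(* In Smoluchowski's discrete model (defined in the context), for every $t\ge0$, every $S\subset[N]$ with $\mathbb{P}(S(t)=S)>0$ and every graph $G$ on vertex set $S$, \[ \mathbb{P}(C(t)=G\mid S(t)=S)=\mathbb{P}\big(ER_S(p^{(N)}_t)=G\ \big|\ ER_S(p^{(N)}_t)\text{ has no component of size}\ge\alpha(N)\big), \] i.e. conditionally on $S(t)$, the configuration on $S(t)$ is an Erdős–Rényi graph on $S(t)$ with edge probability $p^{(N)}_t$ conditioned on having no connected component with at least $\alpha(N)$ vertices.
   Context: Smoluchowski's discrete model: $N\ge2$, $(\alpha(N))$ with $\alpha(N)\to\infty$, $\alpha(N)/N\to0$. Particles $[N]$; each unordered pair $\{i,j\}$ has an independent exponential clock $e_{ij}$ of parameter $1/N$; initially no links. When $e_{ij}$ rings, the link is created unless $i$ or $j$ belongs at that moment to a cluster (connected component of created links) of size $\ge\alpha(N)$, in which case it is never created. $S(t)$ is the set of particles in clusters of size $<\alpha(N)$ at time $t$; $C(t)$ is the graph on $S(t)$ with edges $\{i,j\}\subset S(t)$, $e_{ij}\le t$. $p^{(N)}_t=1-e^{-t/N}$. $ER_S(p)$ is the random graph on vertex set $S$ where each edge is present independently with probability $p$. *)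

theory Defs
  imports "HOL-Probability.Probability"
begin

text \<open>Unordered pairs {i,j} of particles in [N] = {1..N} are encoded as ordered pairs (i,j), i < j.\<close>
definition Pairs :: "nat \<Rightarrow> (nat \<times> nat) set" where
  "Pairs N = {(i,j). 1 \<le> i \<and> i < j \<and> j \<le> N}"

definition SPairs :: "nat set \<Rightarrow> (nat \<times> nat) set" where
  "SPairs S = {(i,j). i \<in> S \<and> j \<in> S \<and> i < j}"

definition comp :: "(nat \<times> nat) set \<Rightarrow> nat \<Rightarrow> nat set" where
  "comp E i = {j. (i,j) \<in> (E \<union> E\<inverse>)\<^sup>*}"

definition clocks :: "nat \<Rightarrow> ((nat \<times> nat) \<Rightarrow> real) measure" where
  "clocks N = PiM (Pairs N) (\<lambda>_. density lborel (exponential_density (1 / real N)))"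

text \<open>All links ever created, for a clock realisation e and threshold a = alpha(N):
  link p is created iff, at its ringing time, both endpoints lie in clusters of size < a
  of the graph formed by the links created strictly earlier.
  (This recursion is on strictly earlier ringing times, so the set is unique.)\<close>
definition links :: "nat \<Rightarrow> real \<Rightarrow> ((nat \<times> nat) \<Rightarrow> real) \<Rightarrow> (nat \<times> nat) set" where
  "links N a e = (THE L. L \<subseteq> Pairs N \<and>
     (\<forall>p\<in>Pairs N. p \<in> L \<longleftrightarrow>
        (real (card (comp {q\<in>L. e q < e p} (fst p))) < a \<and>
         real (card (comp {q\<in>L. e q < e p} (snd p))) < a)))"

definition links_at :: "nat \<Rightarrow> real \<Rightarrow> ((nat \<times> nat) \<Rightarrow> real) \<Rightarrow> real \<Rightarrow> (nat \<times> nat) set" where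
  "links_at N a e t = {p \<in> links N a e. e p \<le> t}"

definition Sset :: "nat \<Rightarrow> real \<Rightarrow> ((nat \<times> nat) \<Rightarrow> real) \<Rightarrow> real \<Rightarrow> nat set" where
  "Sset N a e t = {i \<in> {1..N}. real (card (comp (links_at N a e t) i)) < a}"

definition Cgraph :: "nat \<Rightarrow> real \<Rightarrow> ((nat \<times> nat) \<Rightarrow> real) \<Rightarrow> real \<Rightarrow> (nat \<times> nat) set" where
  "Cgraph N a e t = {p \<in> SPairs (Sset N a e t). e p \<le> t}"

definition ER :: "nat set \<Rightarrow> real \<Rightarrow> (nat \<times> nat) set pmf" where
  "ER S p = map_pmf (\<lambda>f. {x \<in> SPairs S. f x}) (Pi_pmf (SPairs S) False (\<lambda>_. bernoulli_pmf p))"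

definition no_big_comp :: "nat set \<Rightarrow> real \<Rightarrow> (nat \<times> nat) set \<Rightarrow> bool" where
  "no_big_comp S a H \<longleftrightarrow> (\<forall>i\<in>S. real (card (comp H i)) < a)"

definition pN :: "nat \<Rightarrow> real \<Rightarrow> real" where
  "pN N t = 1 - exp (- t / real N)"

end

theory Submission
  imports Defs
begin

text \<open>No link created by time t crosses the
  boundary of S, and inside S every clock that has rung by time t has created its link. Hence
  resampling the clocks of the pairs inside S keeps S(t) = S exactly when the new graph of clocks
  on S rung by time t has no component of size at least \<open>\<alpha>(N)\<close>, and it leaves all links outside S
  unchanged. So the event S(t) = S, C(t) = G is the product of an event in the clocks inside S,
  namely that their rung graph is G and has no big component, and an event in the clocks outside S
  that does not depend on G. Under independent exponential clocks the rung graph on S is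
  \<open>ER\<^sub>S(p\<^sub>t)\<close>, and the factor coming from the clocks outside S cancels in the conditional
  probability.\<close>

section \<open>Clusters\<close>

lemma comp_mono: "E \<subseteq> F \<Longrightarrow> comp E i \<subseteq> comp F i"
  unfolding comp_def by (auto intro: rtrancl_mono[THEN subsetD, rotated])

lemma finite_comp: assumes "finite E" shows "finite (comp E i)"
proof -
  have "comp E i \<subseteq> insert i (fst ` E \<union> snd ` E)"
  proof
    fix j assume "j \<in> comp E i"
    then have "(i,j) \<in> (E \<union> E\<inverse>)\<^sup>*" by (simp add: comp_def)
    then show "j \<in> insert i (fst ` E \<union> snd ` E)"
      by (cases rule: rtranclE) force+
  qed
  then show ?thesis by (rule finite_subset) (use assms in simp)
qed

lemma card_comp_less_if_subset:
  assumes "X \<subseteq> Y" "finite Y" "real (card (comp Y i)) < a"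
  shows "real (card (comp X i)) < a"
proof -
  have "card (comp X i) \<le> card (comp Y i)"
    using assms by (intro card_mono finite_comp comp_mono)
  then show ?thesis using assms(3) by linarith
qed

lemma comp_eq_if_mem: assumes "j \<in> comp E i" shows "comp E j = comp E i"
proof -
  have "sym ((E \<union> E\<inverse>)\<^sup>*)" by (intro sym_rtrancl) (auto simp: sym_def)
  moreover have "(i,j) \<in> (E \<union> E\<inverse>)\<^sup>*" using assms by (simp add: comp_def)
  ultimately have "(j,i) \<in> (E \<union> E\<inverse>)\<^sup>*" by (meson symD)
  with \<open>(i,j) \<in> (E \<union> E\<inverse>)\<^sup>*\<close> show ?thesis
    unfolding comp_def by (auto intro: rtrancl_trans)
qed

lemma snd_mem_comp_fst: "q \<in> E \<Longrightarrow> snd q \<in> comp E (fst q)"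
  unfolding comp_def by (cases q) auto

definition no_crossing :: "(nat \<times> nat) set \<Rightarrow> nat set \<Rightarrow> bool" where
  "no_crossing E A \<longleftrightarrow> (\<forall>q\<in>E. fst q \<in> A \<longleftrightarrow> snd q \<in> A)"

lemma no_crossing_subset: "no_crossing E A \<Longrightarrow> X \<subseteq> E \<Longrightarrow> no_crossing X A"
  by (auto simp: no_crossing_def)

lemma no_crossing_Un: "no_crossing E A \<Longrightarrow> no_crossing F A \<Longrightarrow> no_crossing (E \<union> F) A"
  by (auto simp: no_crossing_def)

lemma no_crossing_SPairs: "E \<subseteq> SPairs A \<Longrightarrow> no_crossing E A"
  by (auto simp: no_crossing_def SPairs_def)

lemma comp_eq_comp_same_side:
  assumes "no_crossing E A"
  shows "comp E i = comp {q\<in>E. fst q \<in> A \<longleftrightarrow> i \<in> A} i"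
proof
  show "comp {q\<in>E. fst q \<in> A \<longleftrightarrow> i \<in> A} i \<subseteq> comp E i" by (rule comp_mono) auto
next
  let ?E' = "{q\<in>E. fst q \<in> A \<longleftrightarrow> i \<in> A}"
  have side: "q \<in> E \<Longrightarrow> fst q \<in> A \<longleftrightarrow> snd q \<in> A" for q
    using assms unfolding no_crossing_def by blast
  have "(i,j) \<in> (E \<union> E\<inverse>)\<^sup>* \<Longrightarrow> (j \<in> A \<longleftrightarrow> i \<in> A) \<and> (i,j) \<in> (?E' \<union> ?E'\<inverse>)\<^sup>*" for j
  proof (induction rule: rtrancl_induct)
    case base then show ?case by simp
  next
    case (step j k)
    then have "(j,k) \<in> E \<or> (k,j) \<in> E" and "j \<in> A \<longleftrightarrow> i \<in> A" by auto
    then have "k \<in> A \<longleftrightarrow> i \<in> A" and "(j,k) \<in> ?E' \<union> ?E'\<inverse>"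
      using side[of "(j,k)"] side[of "(k,j)"] by auto
    then show ?case using step.IH by (auto intro: rtrancl.rtrancl_into_rtrancl)
  qed
  then show "comp E i \<subseteq> comp ?E' i" unfolding comp_def by blast
qed

lemma comp_inside:
  "no_crossing E A \<Longrightarrow> v \<in> A \<Longrightarrow> comp E v = comp {q\<in>E. fst q \<in> A} v"
  using comp_eq_comp_same_side[of E A v] by simp

lemma comp_outside:
  "no_crossing E A \<Longrightarrow> v \<notin> A \<Longrightarrow> comp E v = comp {q\<in>E. fst q \<notin> A} v"
  using comp_eq_comp_same_side[of E A v] by simp

lemma comp_eq_if_outside_eq:
  assumes "no_crossing X A" "no_crossing Y A" "v \<notin> A"
    and "{q\<in>X. fst q \<notin> A} = {q\<in>Y. fst q \<notin> A}"
  shows "comp X v = comp Y v"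
  using comp_outside[OF assms(1,3)] comp_outside[OF assms(2,3)] assms(4) by simp

lemma small_comp_inside:
  assumes "no_crossing X A" "v \<in> A" "{q\<in>X. fst q \<in> A} \<subseteq> G" "finite G" "no_big_comp A a G"
  shows "real (card (comp X v)) < a"
proof -
  have "real (card (comp G v)) < a" using assms(2,5) by (simp add: no_big_comp_def)
  then show ?thesis
    using card_comp_less_if_subset[OF assms(3,4)] comp_inside[OF assms(1,2)] by simp
qed

section \<open>Link creation as a causal fixpoint\<close>

definition causal_fixpoint :: "('a set \<Rightarrow> 'a \<Rightarrow> bool) \<Rightarrow> ('a \<Rightarrow> 'b::linorder) \<Rightarrow> 'a set \<Rightarrow> 'a set \<Rightarrow> bool"
  where "causal_fixpoint \<Phi> e P L \<longleftrightarrow> L \<subseteq> P \<and> (\<forall>p\<in>P. p \<in> L \<longleftrightarrow> \<Phi> {q\<in>L. e q < e p} p)"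

lemma causal_fixpointD:
  "causal_fixpoint \<Phi> e P L \<Longrightarrow> L \<subseteq> P"
  "causal_fixpoint \<Phi> e P L \<Longrightarrow> p \<in> P \<Longrightarrow> p \<in> L \<longleftrightarrow> \<Phi> {q\<in>L. e q < e p} p"
  unfolding causal_fixpoint_def by blast+

lemma causal_fixpoint_extend:
  assumes L: "causal_fixpoint \<Phi> e {p\<in>P. e p < m} L" and le_m: "\<forall>p\<in>P. e p \<le> m"
  shows "causal_fixpoint \<Phi> e P (L \<union> {p\<in>P. e p = m \<and> \<Phi> L p})"
  unfolding causal_fixpoint_def
proof (intro conjI ballI)
  show "L \<union> {p\<in>P. e p = m \<and> \<Phi> L p} \<subseteq> P" using causal_fixpointD(1)[OF L] by auto
next
  fix p assume p: "p \<in> P"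
  let ?L = "L \<union> {p\<in>P. e p = m \<and> \<Phi> L p}"
  show "p \<in> ?L \<longleftrightarrow> \<Phi> {q\<in>?L. e q < e p} p"
  proof (cases "e p < m")
    case True
    then have "{q\<in>?L. e q < e p} = {q\<in>L. e q < e p}" and "p \<in> ?L \<longleftrightarrow> p \<in> L" by auto
    then show ?thesis using causal_fixpointD(2)[OF L] p True by simp
  next
    case False
    then have "e p = m" using le_m p by (simp add: not_less eq_iff)
    moreover from this have "{q\<in>?L. e q < e p} = L" and "p \<notin> L"
      using causal_fixpointD(1)[OF L] by auto
    ultimately show ?thesis using p by auto
  qed
qed

lemma causal_fixpoint_exists:
  assumes "finite P" shows "\<exists>L. causal_fixpoint \<Phi> e P L"
  using assms
proof (induction "card P" arbitrary: P rule: less_induct)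
  case less
  show ?case
  proof (cases "P = {}")
    case True then show ?thesis by (auto simp: causal_fixpoint_def)
  next
    case False
    define m where "m = Max (e ` P)"
    have "m \<in> e ` P" unfolding m_def using False less.prems by simp
    then have "card {p\<in>P. e p < m} < card P"
      using less.prems by (intro psubset_card_mono) auto
    then obtain L where "causal_fixpoint \<Phi> e {p\<in>P. e p < m} L"
      using less.hyps less.prems by force
    moreover have "\<forall>p\<in>P. e p \<le> m" unfolding m_def using less.prems by simp
    ultimately show ?thesis by (blast intro: causal_fixpoint_extend)
  qed
qed

lemma causal_fixpoint_unique:
  assumes "finite P" "causal_fixpoint \<Phi> e P L1" "causal_fixpoint \<Phi> e P L2"
  shows "L1 = L2"
proof -
  have "\<forall>p\<in>P. card {q\<in>P. e q < e p} = n \<longrightarrow> (p \<in> L1 \<longleftrightarrow> p \<in> L2)" for n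
  proof (induction n rule: less_induct)
    case (less n)
    show ?case
    proof (intro ballI impI)
      fix p assume p: "p \<in> P" and n: "card {q\<in>P. e q < e p} = n"
      have "q \<in> L1 \<longleftrightarrow> q \<in> L2" if q: "q \<in> P" "e q < e p" for q
      proof -
        have "card {r\<in>P. e r < e q} < card {r\<in>P. e r < e p}"
          using q assms(1) by (intro psubset_card_mono) auto
        then show ?thesis using less q n by blast
      qed
      then have "{q\<in>L1. e q < e p} = {q\<in>L2. e q < e p}"
        using causal_fixpointD(1)[OF assms(2)] causal_fixpointD(1)[OF assms(3)] by blast
      then show "p \<in> L1 \<longleftrightarrow> p \<in> L2"
        using causal_fixpointD(2)[OF assms(2) p] causal_fixpointD(2)[OF assms(3) p] by simp
    qed
  qed
  then show ?thesis using causal_fixpointD(1)[OF assms(2)] causal_fixpointD(1)[OF assms(3)] by blast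
qed

definition may_link :: "real \<Rightarrow> (nat \<times> nat) set \<Rightarrow> nat \<times> nat \<Rightarrow> bool" where
  "may_link a L p \<longleftrightarrow> real (card (comp L (fst p))) < a \<and> real (card (comp L (snd p))) < a"

lemma finite_Pairs: "finite (Pairs N)"
  by (rule finite_subset[of _ "{1..N} \<times> {1..N}"]) (auto simp: Pairs_def)

lemma links_causal_fixpoint: "causal_fixpoint (may_link a) e (Pairs N) (links N a e)"
proof -
  have "\<exists>!L. causal_fixpoint (may_link a) e (Pairs N) L"
    using causal_fixpoint_exists[OF finite_Pairs] causal_fixpoint_unique[OF finite_Pairs] by blast
  then show ?thesis
    unfolding links_def causal_fixpoint_def may_link_def by (rule theI')
qed

lemma links_at_causal_fixpoint:
  "causal_fixpoint (may_link a) e {p\<in>Pairs N. e p \<le> t} (links_at N a e t)"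
  unfolding causal_fixpoint_def
proof (intro conjI ballI)
  show "links_at N a e t \<subseteq> {p \<in> Pairs N. e p \<le> t}"
    using causal_fixpointD(1)[OF links_causal_fixpoint] by (auto simp: links_at_def)
next
  fix p assume p: "p \<in> {p \<in> Pairs N. e p \<le> t}"
  then have "{q \<in> links_at N a e t. e q < e p} = {q \<in> links N a e. e q < e p}"
    by (auto simp: links_at_def)
  with p show "p \<in> links_at N a e t \<longleftrightarrow> may_link a {q \<in> links_at N a e t. e q < e p} p"
    using causal_fixpointD(2)[OF links_causal_fixpoint] by (simp add: links_at_def)
qed

lemma links_at_eqI:
  "causal_fixpoint (may_link a) e {p\<in>Pairs N. e p \<le> t} L \<Longrightarrow> links_at N a e t = L"
  using causal_fixpoint_unique[OF _ links_at_causal_fixpoint] finite_Pairs by simp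

lemma links_at_subset: "links_at N a e t \<subseteq> {p\<in>Pairs N. e p \<le> t}"
  by (rule causal_fixpointD(1)[OF links_at_causal_fixpoint])

lemma finite_links_at: "finite (links_at N a e t)"
  by (rule finite_subset[OF links_at_subset]) (simp add: finite_Pairs)

section \<open>Resampling the clocks inside S(t)\<close>

definition rung_edges :: "nat set \<Rightarrow> real \<Rightarrow> ((nat \<times> nat) \<Rightarrow> real) \<Rightarrow> (nat \<times> nat) set" where
  "rung_edges S t e = {p\<in>SPairs S. e p \<le> t}"

lemma Cgraph_eq_rung_edges: "Cgraph N a e t = rung_edges (Sset N a e t) t e"
  by (simp add: Cgraph_def rung_edges_def)

lemma SPairs_subset_Pairs: "S \<subseteq> {1..N} \<Longrightarrow> SPairs S \<subseteq> Pairs N"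
  by (auto simp: SPairs_def Pairs_def)

lemma finite_SPairs: "S \<subseteq> {1..N} \<Longrightarrow> finite (SPairs S)"
  using finite_subset[OF SPairs_subset_Pairs finite_Pairs] .

lemma Sset_subset: "Sset N a e t \<subseteq> {1..N}"
  by (auto simp: Sset_def)

lemma small_comp_if_mem_Sset:
  "i \<in> Sset N a e t \<Longrightarrow> X \<subseteq> links_at N a e t \<Longrightarrow> real (card (comp X i)) < a"
  using card_comp_less_if_subset[OF _ finite_links_at] by (auto simp: Sset_def)

lemma rung_edges_Sset_subset_links_at: "rung_edges (Sset N a e t) t e \<subseteq> links_at N a e t"
proof
  fix p assume p: "p \<in> rung_edges (Sset N a e t) t e"
  then have "p \<in> {p\<in>Pairs N. e p \<le> t}"
    using SPairs_subset_Pairs[OF Sset_subset[of N a e t]] by (auto simp: rung_edges_def)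
  moreover have "may_link a {q\<in>links_at N a e t. e q < e p} p"
    using p small_comp_if_mem_Sset by (auto simp: may_link_def rung_edges_def SPairs_def)
  ultimately show "p \<in> links_at N a e t"
    using causal_fixpointD(2)[OF links_at_causal_fixpoint] by blast
qed

lemma no_big_comp_Cgraph: "no_big_comp (Sset N a e t) a (Cgraph N a e t)"
  unfolding no_big_comp_def Cgraph_eq_rung_edges
  using small_comp_if_mem_Sset rung_edges_Sset_subset_links_at by blast

lemma links_at_no_crossing_Sset: "no_crossing (links_at N a e t) (Sset N a e t)"
  unfolding no_crossing_def
proof
  fix q assume q: "q \<in> links_at N a e t"
  then have "comp (links_at N a e t) (snd q) = comp (links_at N a e t) (fst q)"
    by (intro comp_eq_if_mem snd_mem_comp_fst)
  moreover have "q \<in> Pairs N"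
    using q links_at_subset[of N a e t] by auto
  ultimately show "fst q \<in> Sset N a e t \<longleftrightarrow> snd q \<in> Sset N a e t"
    by (auto simp: Sset_def Pairs_def)
qed

lemma links_at_outside_SPairs_Sset:
  assumes "q \<in> links_at N a e t" "q \<notin> SPairs (Sset N a e t)"
  shows "fst q \<notin> Sset N a e t" "snd q \<notin> Sset N a e t"
proof -
  have "fst q < snd q"
    using assms(1) links_at_subset[of N a e t] by (auto simp: Pairs_def)
  then show "fst q \<notin> Sset N a e t" "snd q \<notin> Sset N a e t"
    using assms links_at_no_crossing_Sset[of N a e t] by (auto simp: no_crossing_def SPairs_def)
qed

lemma may_link_resample:
  assumes S: "Sset N a e t = S"
    and agree: "\<forall>p \<in> Pairs N - SPairs S. e' p = e p"
    and small: "no_big_comp S a (rung_edges S t e')"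
  shows "may_link a {q \<in> {q\<in>links_at N a e t. fst q \<notin> S} \<union> rung_edges S t e'. e' q < s} p
    \<longleftrightarrow> may_link a {q\<in>links_at N a e t. e q < s} p"
proof -
  let ?LT = "links_at N a e t"
  define K where "K = {q\<in>?LT. fst q \<notin> S}"
  define G where "G = rung_edges S t e'"
  have cross: "no_crossing ?LT S" using links_at_no_crossing_Sset[of N a e t] S by simp
  have K: "e' q = e q" "snd q \<notin> S" if "q \<in> K" for q
  proof -
    from that have q: "q \<in> ?LT" "fst q \<notin> S" by (auto simp: K_def)
    then have "q \<in> Pairs N - SPairs S"
      using links_at_subset[of N a e t] by (auto simp: SPairs_def)
    then show "e' q = e q" using agree by blast
    show "snd q \<notin> S" using q cross by (auto simp: no_crossing_def)
  qed
  have G: "G \<subseteq> SPairs S" "finite G"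
    using finite_SPairs[OF Sset_subset[of N a e t]] S by (auto simp: G_def rung_edges_def)
  have "no_crossing K S" unfolding K_def by (rule no_crossing_subset[OF cross]) auto
  then have "no_crossing (K \<union> G) S" using no_crossing_SPairs[OF G(1)] by (rule no_crossing_Un)
  then have cross': "no_crossing {q\<in>K \<union> G. e' q < s} S" by (rule no_crossing_subset) auto
  have "real (card (comp {q\<in>K \<union> G. e' q < s} v)) < a \<longleftrightarrow>
      real (card (comp {q\<in>?LT. e q < s} v)) < a" for v
  proof (cases "v \<in> S")
    case True
    then have "real (card (comp {q\<in>K \<union> G. e' q < s} v)) < a"
      using small by (intro small_comp_inside[OF cross' True _ G(2)]) (auto simp: K_def G_def)
    moreover have "real (card (comp {q\<in>?LT. e q < s} v)) < a"
      using True S by (intro small_comp_if_mem_Sset) auto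
    ultimately show ?thesis by simp
  next
    case False
    have "comp {q\<in>K \<union> G. e' q < s} v = comp {q\<in>?LT. e q < s} v"
    proof (rule comp_eq_if_outside_eq[OF cross' _ False])
      show "no_crossing {q\<in>?LT. e q < s} S" by (rule no_crossing_subset[OF cross]) auto
    qed (use K(1) G(1) in \<open>auto simp: K_def SPairs_def\<close>)
    then show ?thesis by simp
  qed
  then show ?thesis unfolding may_link_def K_def G_def by blast
qed

lemma links_at_resample:
  assumes S: "Sset N a e t = S"
    and agree: "\<forall>p \<in> Pairs N - SPairs S. e' p = e p"
    and small: "no_big_comp S a (rung_edges S t e')"
  shows "links_at N a e' t = {q\<in>links_at N a e t. fst q \<notin> S} \<union> rung_edges S t e'"
proof (rule links_at_eqI)
  let ?LT = "links_at N a e t" and ?L' = "{q\<in>links_at N a e t. fst q \<notin> S} \<union> rung_edges S t e'"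
  show "causal_fixpoint (may_link a) e' {p\<in>Pairs N. e' p \<le> t} ?L'"
    unfolding causal_fixpoint_def
  proof (intro conjI ballI)
    have "q \<in> Pairs N - SPairs S" "e q \<le> t" if "q \<in> ?LT" "fst q \<notin> S" for q
      using that links_at_subset[of N a e t] by (auto simp: SPairs_def)
    then show "?L' \<subseteq> {p\<in>Pairs N. e' p \<le> t}"
      using agree SPairs_subset_Pairs[OF Sset_subset[of N a e t]] S by (auto simp: rung_edges_def)
  next
    fix p assume p: "p \<in> {p\<in>Pairs N. e' p \<le> t}"
    show "p \<in> ?L' \<longleftrightarrow> may_link a {q\<in>?L'. e' q < e' p} p"
    proof (cases "p \<in> SPairs S")
      case True
      then have "may_link a {q\<in>?LT. e q < e' p} p"
        using S small_comp_if_mem_Sset[of _ N a e t] by (auto simp: may_link_def SPairs_def)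
      with True p show ?thesis
        using may_link_resample[OF assms] by (auto simp: rung_edges_def)
    next
      case False
      then have "e' p = e p" and "p \<in> {p\<in>Pairs N. e p \<le> t}" using agree p by auto
      have "p \<in> ?L' \<longleftrightarrow> p \<in> ?LT"
        using False links_at_outside_SPairs_Sset[of p N a e t] S by (auto simp: rung_edges_def)
      also have "\<dots> \<longleftrightarrow> may_link a {q\<in>?LT. e q < e p} p"
        using causal_fixpointD(2)[OF links_at_causal_fixpoint] \<open>p \<in> {p\<in>Pairs N. e p \<le> t}\<close> by blast
      finally show ?thesis using may_link_resample[OF assms] \<open>e' p = e p\<close> by simp
    qed
  qed
qed

lemma Sset_resample:
  assumes S: "Sset N a e t = S"
    and agree: "\<forall>p \<in> Pairs N - SPairs S. e' p = e p"
    and small: "no_big_comp S a (rung_edges S t e')"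
  shows "Sset N a e' t = S"
proof -
  let ?LT = "links_at N a e t" and ?G = "rung_edges S t e'"
  have LT': "links_at N a e' t = {q\<in>?LT. fst q \<notin> S} \<union> ?G"
    by (rule links_at_resample[OF assms])
  have cross: "no_crossing ?LT S" using links_at_no_crossing_Sset[of N a e t] S by simp
  have G: "?G \<subseteq> SPairs S" by (auto simp: rung_edges_def)
  have cross': "no_crossing (links_at N a e' t) S"
    unfolding LT' by (intro no_crossing_Un no_crossing_SPairs no_crossing_subset[OF cross] G) auto
  have "real (card (comp (links_at N a e' t) i)) < a \<longleftrightarrow> i \<in> S" if "i \<in> {1..N}" for i
  proof (cases "i \<in> S")
    case True
    have "{q\<in>links_at N a e' t. fst q \<in> S} = ?G" using G by (auto simp: LT' SPairs_def)
    then have "comp (links_at N a e' t) i = comp ?G i" using comp_inside[OF cross' True] by simp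
    then show ?thesis using small True by (simp add: no_big_comp_def)
  next
    case False
    have "comp (links_at N a e' t) i = comp ?LT i"
      by (rule comp_eq_if_outside_eq[OF cross' cross False]) (use G in \<open>auto simp: LT' SPairs_def\<close>)
    then show ?thesis using False S that by (auto simp: Sset_def)
  qed
  then show ?thesis using Sset_subset S by (auto simp: Sset_def)
qed

lemma Sset_eq_iff_resampled:
  assumes S: "Sset N a e0 t = S"
    and inside: "\<forall>p \<in> SPairs S. e' p = e0 p"
    and outside: "\<forall>p \<in> Pairs N - SPairs S. e' p = e p"
  shows "Sset N a e t = S \<longleftrightarrow> no_big_comp S a (rung_edges S t e) \<and> Sset N a e' t = S"
proof
  assume e: "Sset N a e t = S"
  have "rung_edges S t e' = rung_edges S t e0" using inside by (auto simp: rung_edges_def)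
  then have "no_big_comp S a (rung_edges S t e')"
    using no_big_comp_Cgraph[of N a e0 t] S by (simp add: Cgraph_eq_rung_edges)
  then show "no_big_comp S a (rung_edges S t e) \<and> Sset N a e' t = S"
    using no_big_comp_Cgraph[of N a e t] e Sset_resample[OF e outside]
    by (simp add: Cgraph_eq_rung_edges)
next
  assume "no_big_comp S a (rung_edges S t e) \<and> Sset N a e' t = S"
  then show "Sset N a e t = S" using Sset_resample[of N a e' t S e] outside by auto
qed

lemma Sset_Cgraph_iff_merge:
  assumes "Sset N a e0 t = S"
  shows "Sset N a e t = S \<and> R (Cgraph N a e t) \<longleftrightarrow>
    no_big_comp S a (rung_edges S t e) \<and> R (rung_edges S t e) \<and>
    Sset N a (merge (SPairs S) (Pairs N - SPairs S) (e0, e)) t = S"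
proof -
  have "Sset N a e t = S \<longleftrightarrow> no_big_comp S a (rung_edges S t e) \<and>
      Sset N a (merge (SPairs S) (Pairs N - SPairs S) (e0, e)) t = S"
    using assms by (intro Sset_eq_iff_resampled) auto
  then show ?thesis by (auto simp: Cgraph_eq_rung_edges)
qed

section \<open>Exponential clocks and Erdos-Renyi graphs\<close>

definition exp_clock :: "nat \<Rightarrow> real measure" where
  "exp_clock N = density lborel (exponential_density (1 / real N))"

lemma clocks_eq_PiM_exp_clock: "clocks N = PiM (Pairs N) (\<lambda>_. exp_clock N)"
  by (simp add: clocks_def exp_clock_def)

lemma prob_space_exp_clock: "N > 0 \<Longrightarrow> prob_space (exp_clock N)"
  unfolding exp_clock_def by (rule prob_space_exponential_density) simp

lemma space_exp_clock [simp]: "space (exp_clock N) = UNIV"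
  by (simp add: exp_clock_def)

lemma sets_exp_clock [simp]: "sets (exp_clock N) = sets borel"
  by (simp add: exp_clock_def)

lemma measure_exp_clock_atMost:
  assumes "N > 0" "t \<ge> 0" shows "measure (exp_clock N) {..t} = pN N t"
proof -
  have "emeasure (exp_clock N) {..t} = erlang_CDF 0 (1 / real N) t"
    unfolding exp_clock_def by (rule emeasure_erlang_density) (use assms in simp)
  then show ?thesis
    using assms by (simp add: measure_def erlang_CDF_nonneg erlang_CDF_0 pN_def)
qed

lemma measure_exp_clock_greaterThan:
  assumes "N > 0" "t \<ge> 0" shows "measure (exp_clock N) {t<..} = 1 - pN N t"
proof -
  interpret prob_space "exp_clock N" by (rule prob_space_exp_clock) fact
  have "{t<..} = space (exp_clock N) - {..t}" by auto
  then show ?thesis using prob_compl[of "{..t}"] measure_exp_clock_atMost[OF assms] by simp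
qed

lemma pmf_ER:
  assumes fin: "finite (SPairs S)" and p: "0 \<le> p" "p \<le> 1" and G: "G \<subseteq> SPairs S"
  shows "pmf (ER S p) G = (\<Prod>x\<in>SPairs S. if x \<in> G then p else 1 - p)"
proof -
  define M where "M = Pi_pmf (SPairs S) False (\<lambda>_. bernoulli_pmf p)"
  define g where "g = (\<lambda>x. x \<in> G)"
  have "(\<lambda>h. {x\<in>SPairs S. h x}) -` {G} \<inter> set_pmf M = {g} \<inter> set_pmf M"
  proof (intro set_eqI iffI)
    fix h assume h: "h \<in> (\<lambda>h. {x\<in>SPairs S. h x}) -` {G} \<inter> set_pmf M"
    have "set_pmf M \<subseteq> {f. \<forall>x. x \<notin> SPairs S \<longrightarrow> f x = False}"
      using set_Pi_pmf_subset[OF fin] unfolding M_def .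
    with h have "h x = False" if "x \<notin> SPairs S" for x
      using that by blast
    with h G show "h \<in> {g} \<inter> set_pmf M" by (auto simp: g_def fun_eq_iff)
  qed (use G in \<open>auto simp: g_def\<close>)
  then have "pmf (ER S p) G = measure M ({g} \<inter> set_pmf M)"
    by (simp add: ER_def pmf_map M_def measure_Int_set_pmf[symmetric, where A="_ -` _"])
  also have "\<dots> = pmf M g"
    by (simp add: measure_Int_set_pmf measure_pmf_single)
  also have "\<dots> = (\<Prod>x\<in>SPairs S. if x \<in> G then p else 1 - p)"
    using G fin p by (auto simp: M_def pmf_Pi g_def intro!: prod.cong)
  finally show ?thesis .
qed

lemma measure_ER_eq_sum_pmf:
  assumes "finite (SPairs S)"
  shows "measure_pmf.prob (ER S p) {H. Q H} = (\<Sum>H\<in>{H\<in>Pow (SPairs S). Q H}. pmf (ER S p) H)"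
proof -
  have "set_pmf (ER S p) \<subseteq> Pow (SPairs S)" by (auto simp: ER_def)
  then have "{H. Q H} \<inter> set_pmf (ER S p) = {H\<in>Pow (SPairs S). Q H} \<inter> set_pmf (ER S p)" by auto
  then have "measure_pmf.prob (ER S p) {H. Q H} = measure_pmf.prob (ER S p) {H\<in>Pow (SPairs S). Q H}"
    by (metis measure_Int_set_pmf)
  also have "\<dots> = (\<Sum>H\<in>{H\<in>Pow (SPairs S). Q H}. pmf (ER S p) H)"
    using assms by (intro measure_measure_pmf_finite) simp
  finally show ?thesis .
qed

definition rung_box :: "nat set \<Rightarrow> real \<Rightarrow> (nat \<times> nat) set \<Rightarrow> ((nat \<times> nat) \<Rightarrow> real) set" where
  "rung_box S t H = PiE (SPairs S) (\<lambda>p. if p \<in> H then {..t} else {t<..})"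

lemma sets_rung_box: "finite (SPairs S) \<Longrightarrow> rung_box S t H \<in> sets (PiM (SPairs S) (\<lambda>_. exp_clock N))"
  unfolding rung_box_def by (intro sets_PiM_I_finite) auto

lemma rung_box_subset_space: "rung_box S t H \<subseteq> space (PiM (SPairs S) (\<lambda>_. exp_clock N))"
  by (auto simp: rung_box_def space_PiM)

lemma mem_rung_box:
  assumes "H \<subseteq> SPairs S" "x \<in> space (PiM (SPairs S) (\<lambda>_. exp_clock N))"
  shows "x \<in> rung_box S t H \<longleftrightarrow> rung_edges S t x = H"
  using assms by (auto simp: rung_box_def rung_edges_def space_PiM PiE_iff)

lemma measure_rung_box:
  assumes "N > 0" "t \<ge> 0" "finite (SPairs S)" "H \<subseteq> SPairs S"
  shows "measure (PiM (SPairs S) (\<lambda>_. exp_clock N)) (rung_box S t H) = pmf (ER S (pN N t)) H"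
proof -
  interpret prob_space "exp_clock N" by (rule prob_space_exp_clock) fact
  interpret product_sigma_finite "\<lambda>_::nat \<times> nat. exp_clock N" by standard
  have "emeasure (PiM (SPairs S) (\<lambda>_. exp_clock N)) (rung_box S t H) =
     (\<Prod>p\<in>SPairs S. emeasure (exp_clock N) (if p \<in> H then {..t} else {t<..}))"
    unfolding rung_box_def by (rule emeasure_PiM) (use assms in auto)
  also have "\<dots> = (\<Prod>p\<in>SPairs S. ennreal (if p \<in> H then pN N t else 1 - pN N t))"
    using measure_exp_clock_atMost[OF assms(1,2)] measure_exp_clock_greaterThan[OF assms(1,2)]
    by (intro prod.cong) (auto simp: emeasure_eq_measure)
  also have "\<dots> = ennreal (\<Prod>p\<in>SPairs S. if p \<in> H then pN N t else 1 - pN N t)"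
    using assms(2) by (intro prod_ennreal) (auto simp: pN_def)
  finally have "measure (PiM (SPairs S) (\<lambda>_. exp_clock N)) (rung_box S t H)
      = (\<Prod>p\<in>SPairs S. if p \<in> H then pN N t else 1 - pN N t)"
    using assms(2) by (simp add: measure_def prod_nonneg pN_def)
  also have "\<dots> = pmf (ER S (pN N t)) H"
    using assms by (intro pmf_ER[symmetric]) (auto simp: pN_def)
  finally show ?thesis .
qed

lemma rung_edges_preimage_eq_UN:
  "{x \<in> space (PiM (SPairs S) (\<lambda>_. exp_clock N)). Q (rung_edges S t x)}
     = (\<Union>H\<in>{H\<in>Pow (SPairs S). Q H}. rung_box S t H)"
proof (intro set_eqI iffI)
  fix x assume "x \<in> {x \<in> space (PiM (SPairs S) (\<lambda>_. exp_clock N)). Q (rung_edges S t x)}"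
  moreover have "rung_edges S t x \<subseteq> SPairs S" by (auto simp: rung_edges_def)
  ultimately show "x \<in> (\<Union>H\<in>{H\<in>Pow (SPairs S). Q H}. rung_box S t H)"
    using mem_rung_box[of "rung_edges S t x" S x N t] by auto
next
  fix x assume "x \<in> (\<Union>H\<in>{H\<in>Pow (SPairs S). Q H}. rung_box S t H)"
  then obtain H where "H \<subseteq> SPairs S" "Q H" "x \<in> rung_box S t H" by auto
  then show "x \<in> {x \<in> space (PiM (SPairs S) (\<lambda>_. exp_clock N)). Q (rung_edges S t x)}"
    using mem_rung_box[of H S x N t] rung_box_subset_space[of S t H N] by auto
qed

lemma sets_rung_edges_preimage:
  assumes "finite (SPairs S)"
  shows "{x \<in> space (PiM (SPairs S) (\<lambda>_. exp_clock N)). Q (rung_edges S t x)}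
    \<in> sets (PiM (SPairs S) (\<lambda>_. exp_clock N))"
  unfolding rung_edges_preimage_eq_UN using sets_rung_box[OF assms] assms
  by (intro sets.finite_UN) auto

lemma measure_rung_edges_preimage:
  assumes "N > 0" "t \<ge> 0" "finite (SPairs S)"
  shows "measure (PiM (SPairs S) (\<lambda>_. exp_clock N))
      {x \<in> space (PiM (SPairs S) (\<lambda>_. exp_clock N)). Q (rung_edges S t x)}
    = measure_pmf.prob (ER S (pN N t)) {H. Q H}"
proof -
  let ?P = "PiM (SPairs S) (\<lambda>_. exp_clock N)" and ?C = "{H\<in>Pow (SPairs S). Q H}"
  interpret prob_space ?P by (rule prob_space_PiM) (rule prob_space_exp_clock[OF assms(1)])
  have "rung_box S t G \<inter> rung_box S t H = {}" if "G \<in> ?C" "H \<in> ?C" "G \<noteq> H" for G H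
  proof (intro equals0I)
    fix x assume "x \<in> rung_box S t G \<inter> rung_box S t H"
    then show False
      using that mem_rung_box[of G S x N t] mem_rung_box[of H S x N t] rung_box_subset_space[of S t G N]
      by auto
  qed
  then have "disjoint_family_on (rung_box S t) ?C"
    unfolding disjoint_family_on_def by blast
  then have "measure ?P (\<Union>H\<in>?C. rung_box S t H) = (\<Sum>H\<in>?C. measure ?P (rung_box S t H))"
    using assms(3) sets_rung_box[OF assms(3)] by (intro finite_measure_finite_Union) auto
  also have "\<dots> = (\<Sum>H\<in>?C. pmf (ER S (pN N t)) H)"
    using measure_rung_box[OF assms] by (intro sum.cong) auto
  finally show ?thesis
    unfolding rung_edges_preimage_eq_UN measure_ER_eq_sum_pmf[OF assms(3)] .
qed

section \<open>Factorization of the law of the clocks\<close>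

lemma (in product_sigma_finite) measure_PiM_restrict_Times:
  assumes IJ: "I \<inter> J = {}" and fin: "finite I" "finite J"
    and A: "A \<in> sets (PiM I M)" and B: "B \<in> sets (PiM J M)"
  shows "measure (PiM (I \<union> J) M) {e \<in> space (PiM (I \<union> J) M). restrict e I \<in> A \<and> restrict e J \<in> B}
    = measure (PiM I M) A * measure (PiM J M) B"
proof -
  interpret J: finite_product_sigma_finite M J by standard fact
  let ?P = "PiM (I \<union> J) M" and ?PIJ = "PiM I M \<Otimes>\<^sub>M PiM J M"
  let ?E = "{e \<in> space ?P. restrict e I \<in> A \<and> restrict e J \<in> B}"
  have "?E = ((\<lambda>e. restrict e I) -` A \<inter> space ?P) \<inter> ((\<lambda>e. restrict e J) -` B \<inter> space ?P)"
    by auto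
  also have "\<dots> \<in> sets ?P"
    by (intro sets.Int measurable_sets[OF measurable_restrict_subset] A B) auto
  finally have "?E \<in> sets ?P" .
  have restrict_id: "restrict x K = x" if "x \<in> space (PiM K M)" for x K
    using that by (simp add: space_PiM PiE_def extensional_restrict)
  have "merge I J -` ?E \<inter> space ?PIJ = A \<times> B"
  proof (intro set_eqI iffI)
    fix z assume "z \<in> merge I J -` ?E \<inter> space ?PIJ"
    then show "z \<in> A \<times> B"
      using IJ restrict_id by (auto simp: space_pair_measure)
  next
    fix z assume z: "z \<in> A \<times> B"
    then have "z \<in> space ?PIJ"
      using sets.sets_into_space[OF A] sets.sets_into_space[OF B] by (auto simp: space_pair_measure)
    then show "z \<in> merge I J -` ?E \<inter> space ?PIJ"
      using z IJ restrict_id measurable_space[OF measurable_merge, of z] by (auto simp: space_pair_measure)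
  qed
  have "measure ?P ?E = measure (distr ?PIJ ?P (merge I J)) ?E"
    using distr_merge[OF IJ fin] by simp
  also have "\<dots> = measure ?PIJ (A \<times> B)"
    using measure_distr[OF measurable_merge \<open>?E \<in> sets ?P\<close>] \<open>merge I J -` ?E \<inter> space ?PIJ = A \<times> B\<close>
    by simp
  also have "\<dots> = measure (PiM I M) A * measure (PiM J M) B"
    using J.emeasure_pair_measure_Times[OF A B] by (simp add: measure_def enn2real_mult)
  finally show ?thesis .
qed

lemma sets_merge_section:
  assumes "Z \<in> sets (PiM (I \<union> J) M)" "x \<in> space (PiM I M)"
  shows "{y \<in> space (PiM J M). merge I J (x, y) \<in> Z} \<in> sets (PiM J M)"
  using measurable_sets[OF measurable_Pair2[OF measurable_merge assms(2)] assms(1)]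
  by (simp add: vimage_def Int_def conj_commute)

lemma measure_Sset_Cgraph_eq:
  assumes N: "N > 0" and t: "t \<ge> 0" and e0: "Sset N a e0 t = S"
    and Z: "{e \<in> space (clocks N). Sset N a e t = S} \<in> sets (clocks N)"
  shows "measure (clocks N) {e \<in> space (clocks N). Sset N a e t = S \<and> R (Cgraph N a e t)}
    = measure_pmf.prob (ER S (pN N t)) {H. no_big_comp S a H \<and> R H}
      * measure (PiM (Pairs N - SPairs S) (\<lambda>_. exp_clock N))
          {y \<in> space (PiM (Pairs N - SPairs S) (\<lambda>_. exp_clock N)).
            Sset N a (merge (SPairs S) (Pairs N - SPairs S) (e0, y)) t = S}"
proof -
  define I where "I = SPairs S"
  define J where "J = Pairs N - I"
  define M where "M = (\<lambda>_::nat \<times> nat. exp_clock N)"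
  define A where "A = {x \<in> space (PiM I M). no_big_comp S a (rung_edges S t x) \<and> R (rung_edges S t x)}"
  define B where "B = {y \<in> space (PiM J M). Sset N a (merge I J (e0, y)) t = S}"
  interpret prob_space "exp_clock N" by (rule prob_space_exp_clock) fact
  interpret product_sigma_finite M unfolding M_def by standard
  have S: "S \<subseteq> {1..N}" using Sset_subset[of N a e0 t] e0 by simp
  have IJ: "I \<inter> J = {}" "I \<union> J = Pairs N" and fin: "finite I" "finite J"
    using SPairs_subset_Pairs[OF S] finite_SPairs[OF S] finite_Pairs
    by (auto simp: I_def J_def)
  have clocks: "clocks N = PiM (I \<union> J) M" unfolding clocks_eq_PiM_exp_clock IJ(2) M_def ..
  have space: "restrict x K \<in> space (PiM K M)" "merge I J (x, y) \<in> space (clocks N)" for x y K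
    by (simp_all add: clocks space_PiM PiE_def M_def)
  have A: "A \<in> sets (PiM I M)"
    unfolding A_def I_def M_def by (rule sets_rung_edges_preimage[OF finite_SPairs[OF S]])
  have "{y \<in> space (PiM J M). merge I J (restrict e0 I, y) \<in> {e \<in> space (clocks N). Sset N a e t = S}}
      \<in> sets (PiM J M)"
    using Z clocks space by (intro sets_merge_section) auto
  then have B: "B \<in> sets (PiM J M)"
    using space by (simp add: B_def)
  have "{e \<in> space (clocks N). Sset N a e t = S \<and> R (Cgraph N a e t)}
      = {e \<in> space (PiM (I \<union> J) M). restrict e I \<in> A \<and> restrict e J \<in> B}"
  proof (rule Collect_cong)
    fix e
    have "rung_edges S t (restrict e I) = rung_edges S t e" by (auto simp: rung_edges_def I_def)
    moreover have "Sset N a e t = S \<and> R (Cgraph N a e t) \<longleftrightarrow> no_big_comp S a (rung_edges S t e) \<and>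
        R (rung_edges S t e) \<and> Sset N a (merge I J (e0, e)) t = S"
      using Sset_Cgraph_iff_merge[OF e0, of e R] by (simp add: I_def J_def)
    ultimately show "e \<in> space (clocks N) \<and> Sset N a e t = S \<and> R (Cgraph N a e t) \<longleftrightarrow>
        e \<in> space (PiM (I \<union> J) M) \<and> restrict e I \<in> A \<and> restrict e J \<in> B"
      using space clocks by (auto simp: A_def B_def)
  qed
  also have "measure (clocks N) \<dots> = measure (PiM I M) A * measure (PiM J M) B"
    using measure_PiM_restrict_Times[OF IJ(1) fin A B] clocks by simp
  also have "measure (PiM I M) A = measure_pmf.prob (ER S (pN N t)) {H. no_big_comp S a H \<and> R H}"
    unfolding A_def I_def M_def by (rule measure_rung_edges_preimage[OF N t finite_SPairs[OF S]])
  finally show ?thesis by (simp add: B_def I_def J_def M_def)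
qed

lemma measure_Sset_Cgraph_factorizes:
  assumes "N > 0" "t \<ge> 0"
    and pos: "measure (clocks N) {e \<in> space (clocks N). Sset N a e t = S} > 0"
  obtains \<beta> where "\<And>R. measure (clocks N) {e \<in> space (clocks N). Sset N a e t = S \<and> R (Cgraph N a e t)}
      = measure_pmf.prob (ER S (pN N t)) {H. no_big_comp S a H \<and> R H} * \<beta>"
proof -
  let ?Z = "{e \<in> space (clocks N). Sset N a e t = S}"
  \<comment> \<open>Measurability of the event S(t) = S is read off its positive measure.\<close>
  have "?Z \<in> sets (clocks N)" using pos measure_notin_sets[of ?Z] by fastforce
  moreover have "?Z \<noteq> {}" using pos by (intro notI) simp
  then obtain e0 where "Sset N a e0 t = S" by blast
  ultimately show ?thesis using that measure_Sset_Cgraph_eq[OF assms(1,2)] by blast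
qed

theorem lemma4p1:
  fixes \<alpha> :: "nat \<Rightarrow> real" and N :: nat and t :: real
    and S :: "nat set" and G :: "(nat \<times> nat) set"
  assumes "filterlim \<alpha> at_top sequentially"
    and "(\<lambda>n. \<alpha> n / real n) \<longlonglongrightarrow> 0"
    and "N \<ge> 2"
    and "t \<ge> 0"
    and "S \<subseteq> {1..N}"
    and "measure (clocks N) {e \<in> space (clocks N). Sset N (\<alpha> N) e t = S} > 0"
    and "G \<subseteq> SPairs S"
  shows "measure (clocks N) {e \<in> space (clocks N). Cgraph N (\<alpha> N) e t = G \<and> Sset N (\<alpha> N) e t = S}
           / measure (clocks N) {e \<in> space (clocks N). Sset N (\<alpha> N) e t = S}
         = measure_pmf.prob (ER S (pN N t)) {H. H = G \<and> no_big_comp S (\<alpha> N) H}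
           / measure_pmf.prob (ER S (pN N t)) {H. no_big_comp S (\<alpha> N) H}"
proof -
  obtain \<beta> where factor: "\<And>R. measure (clocks N) {e \<in> space (clocks N). Sset N (\<alpha> N) e t = S \<and> R (Cgraph N (\<alpha> N) e t)}
      = measure_pmf.prob (ER S (pN N t)) {H. no_big_comp S (\<alpha> N) H \<and> R H} * \<beta>"
    using measure_Sset_Cgraph_factorizes[of N t "\<alpha> N" S] assms(3,4,6) by auto
  have numerator: "measure (clocks N) {e \<in> space (clocks N). Cgraph N (\<alpha> N) e t = G \<and> Sset N (\<alpha> N) e t = S}
      = measure_pmf.prob (ER S (pN N t)) {H. H = G \<and> no_big_comp S (\<alpha> N) H} * \<beta>"
    using factor[of "\<lambda>H. H = G"] by (simp add: conj_commute)
  have denominator: "measure (clocks N) {e \<in> space (clocks N). Sset N (\<alpha> N) e t = S}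
      = measure_pmf.prob (ER S (pN N t)) {H. no_big_comp S (\<alpha> N) H} * \<beta>"
    using factor[of "\<lambda>_. True"] by simp
  with assms(6) have "\<beta> \<noteq> 0" by auto
  then show ?thesis unfolding numerator denominator by simp
qed

end
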